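(* Let $\mathcal{L}$ and $\mathcal{L}'$ be lattices such that $\mathcal{L}$ can be embedded in $\mathcal{L}'$, and let $l,u:\mathbb{N}\to\mathbb{N}$. If $\mathcal{L}$ is $\Omega(l(n))$ then $\mathcal{L}'$ is $\Omega(l(n))$; and if $\mathcal{L}'$ is $O(u(n))$ then $\mathcal{L}$ is $O(u(n))$.
   Context: A lattice means a partially ordered set $(\mathcal{L},\sqsubseteq)$ with least element $\bot$ in which any two elements have a least upper bound $\sqcup$; for finite $S$, $\bigsqcup S$ is its least upper bound ($\bigsqcup\emptyset=\bot$). A lattice homomorphism $h:\mathcal{L}\to\mathcal{L}'$ satisfies $h(\bot_{\mathcal{L}})=\bot_{\mathcal{L}'}$ and $h(\ell\sqcup\ell')=h(\ell)\sqcup h(\ell')$; it is an embedding (and $\mathcal{L}$ can be embedded in $\mathcal{L}'$) if $h$ is injective. The closure set of a finite $S\subseteq\mathcal{L}$ is $C(S)=\{\bigsqcup S' : S'\subseteq S\}$, and $CS_{\mathcal{L}}(n)=\max\{|C(S)| : S\subseteq\mathcal{L}\text{ finite}, |S|\le n\}$. For $f,g:\mathbb{N}\to\mathbb{N}$: $f$ is $O(g)$ iff $\exists N_0\in\mathbb{N},\exists$ rational $C>0$ with $f(n)\le Cg(n)$ for all $n\ge N_0$; $f$ is $\Omega(g)$ iff $\exists N_0,\exists C>0$ rational with $f(n)\ge Cg(n)$ for all $n\ge N_0$. A lattice $\mathcal{L}$ is $O(f(n))$ (resp. $\Omega(f(n))$) iff $CS_{\mathcal{L}}(n)$ is. *)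

theory Defs
  imports Main "HOL.Rat"
begin

text \<open>A lattice in the paper's sense (poset with least element and binary joins)
  is a type of class bounded_semilattice_sup_bot.\<close>

definition lub_set :: "'a::bounded_semilattice_sup_bot set \<Rightarrow> 'a" where
  "lub_set S = (THE x. (\<forall>y\<in>S. y \<le> x) \<and> (\<forall>z. (\<forall>y\<in>S. y \<le> z) \<longrightarrow> x \<le> z))"

definition closure_set :: "'a::bounded_semilattice_sup_bot set \<Rightarrow> 'a set" where
  "closure_set S = {lub_set S' | S'. S' \<subseteq> S}"

definition CS :: "'a::bounded_semilattice_sup_bot itself \<Rightarrow> nat \<Rightarrow> nat" where
  "CS _ n = Max {card (closure_set S) | S :: 'a set. finite S \<and> card S \<le> n}"

definition lattice_hom :: "('a::bounded_semilattice_sup_bot \<Rightarrow> 'b::bounded_semilattice_sup_bot) \<Rightarrow> bool" where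
  "lattice_hom h \<longleftrightarrow> h bot = bot \<and> (\<forall>x y. h (sup x y) = sup (h x) (h y))"

definition lattice_embedding :: "('a::bounded_semilattice_sup_bot \<Rightarrow> 'b::bounded_semilattice_sup_bot) \<Rightarrow> bool" where
  "lattice_embedding h \<longleftrightarrow> lattice_hom h \<and> inj h"

definition bigO :: "(nat \<Rightarrow> nat) \<Rightarrow> (nat \<Rightarrow> nat) \<Rightarrow> bool" where
  "bigO f g \<longleftrightarrow> (\<exists>N0::nat. \<exists>C::rat. C > 0 \<and> (\<forall>n\<ge>N0. of_nat (f n) \<le> C * of_nat (g n)))"

definition bigOmega :: "(nat \<Rightarrow> nat) \<Rightarrow> (nat \<Rightarrow> nat) \<Rightarrow> bool" where
  "bigOmega f g \<longleftrightarrow> (\<exists>N0::nat. \<exists>C::rat. C > 0 \<and> (\<forall>n\<ge>N0. of_nat (f n) \<ge> C * of_nat (g n)))"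

end

theory Submission
  imports Defs
begin

text \<open>An embedding h commutes with finite joins, so it maps the closure set of S bijectively
  onto the closure set of h ` S, which has no more generators than S. Hence CS grows
  monotonically along embeddings, and both asymptotic claims follow from this pointwise bound.\<close>

lemma lub_set_eqI:
  assumes "\<forall>y\<in>S. y \<le> x" and "\<And>z. \<forall>y\<in>S. y \<le> z \<Longrightarrow> x \<le> z"
  shows "lub_set S = x"
  unfolding lub_set_def
proof (rule the_equality)
  show "(\<forall>y\<in>S. y \<le> x) \<and> (\<forall>z. (\<forall>y\<in>S. y \<le> z) \<longrightarrow> x \<le> z)"
    using assms by blast
next
  fix x' assume "(\<forall>y\<in>S. y \<le> x') \<and> (\<forall>z. (\<forall>y\<in>S. y \<le> z) \<longrightarrow> x' \<le> z)"
  then show "x' = x" using assms by (blast intro: antisym)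
qed

lemma lub_set_empty [simp]: "lub_set {} = bot"
  by (rule lub_set_eqI) simp_all

lemma lub_set_least_upper_bound:
  assumes "finite S"
  shows "(\<forall>y\<in>S. y \<le> lub_set S) \<and> (\<forall>z. (\<forall>y\<in>S. y \<le> z) \<longrightarrow> lub_set S \<le> z)"
  using assms
proof (induction S rule: finite_induct)
  case empty
  then show ?case by simp
next
  case (insert x F)
  have "lub_set (insert x F) = sup x (lub_set F)"
    by (rule lub_set_eqI) (use insert.IH in \<open>auto intro: le_supI2\<close>)
  then show ?case
    using insert.IH by (auto intro: le_supI2)
qed

lemma lub_set_insert:
  assumes "finite S"
  shows "lub_set (insert x S) = sup x (lub_set S)"
  by (rule lub_set_eqI) (use lub_set_least_upper_bound[OF assms] in \<open>auto intro: le_supI2\<close>)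

lemma lattice_hom_lub_set:
  assumes "lattice_hom h" and "finite S"
  shows "h (lub_set S) = lub_set (h ` S)"
  using assms(2)
  by (induction S rule: finite_induct)
     (use assms(1) in \<open>simp_all add: lub_set_insert lattice_hom_def\<close>)

lemma closure_set_eq: "closure_set S = lub_set ` Pow S"
  unfolding closure_set_def by auto

lemma lattice_hom_closure_set:
  assumes "lattice_hom h" and "finite S"
  shows "closure_set (h ` S) = h ` closure_set S"
proof -
  have "closure_set (h ` S) = lub_set ` image h ` Pow S"
    by (simp add: closure_set_eq image_Pow_surj)
  also have "\<dots> = h ` lub_set ` Pow S"
    unfolding image_image
    using assms by (intro image_cong) (auto simp: lattice_hom_lub_set dest: finite_subset)
  finally show ?thesis
    by (simp add: closure_set_eq)
qed

lemma card_closure_set_le: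
  assumes "finite S"
  shows "card (closure_set S) \<le> 2 ^ card S"
proof -
  have "card (closure_set S) \<le> card (Pow S)"
    unfolding closure_set_eq using assms by (simp add: card_image_le)
  then show ?thesis
    using assms by (simp add: card_Pow)
qed

lemma finite_closure_set_cards:
  "finite {card (closure_set S) | S :: 'a::bounded_semilattice_sup_bot set. finite S \<and> card S \<le> n}"
proof (rule finite_subset)
  have "card (closure_set S) \<le> 2 ^ n" if "finite S" "card S \<le> n" for S :: "'a set"
    using card_closure_set_le[OF that(1)] power_increasing[OF that(2), of "2::nat"] by linarith
  then show "{card (closure_set S) | S :: 'a set. finite S \<and> card S \<le> n} \<subseteq> {..(2::nat) ^ n}"
    by auto
qed simp

lemma card_closure_set_le_CS:
  fixes S :: "'a::bounded_semilattice_sup_bot set"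
  assumes "finite S" and "card S \<le> n"
  shows "card (closure_set S) \<le> CS TYPE('a) n"
  unfolding CS_def using assms by (blast intro: Max_ge[OF finite_closure_set_cards])

lemma CS_attained:
  obtains S :: "'a::bounded_semilattice_sup_bot set"
  where "finite S" and "card S \<le> n" and "CS TYPE('a) n = card (closure_set S)"
proof -
  have "card (closure_set ({} :: 'a set))
          \<in> {card (closure_set S) | S :: 'a set. finite S \<and> card S \<le> n}"
    by auto
  then have "{card (closure_set S) | S :: 'a set. finite S \<and> card S \<le> n} \<noteq> {}"
    by blast
  from Max_in[OF finite_closure_set_cards this] show ?thesis
    using that unfolding CS_def by blast
qed

lemma CS_mono_embedding:
  fixes h :: "'a::bounded_semilattice_sup_bot \<Rightarrow> 'b::bounded_semilattice_sup_bot"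
  assumes "lattice_embedding h"
  shows "CS TYPE('a) n \<le> CS TYPE('b) n"
proof -
  have hom: "lattice_hom h" and "inj h"
    using assms by (auto simp: lattice_embedding_def)
  obtain S :: "'a set" where S: "finite S" "card S \<le> n" "CS TYPE('a) n = card (closure_set S)"
    by (rule CS_attained)
  have "CS TYPE('a) n = card (h ` closure_set S)"
    using S(3) \<open>inj h\<close> by (simp add: card_image inj_on_subset)
  also have "\<dots> = card (closure_set (h ` S))"
    using lattice_hom_closure_set[OF hom S(1)] by simp
  also have "\<dots> \<le> CS TYPE('b) n"
    using S(1,2) card_image_le[OF S(1), of h] by (intro card_closure_set_le_CS) auto
  finally show ?thesis .
qed

lemma bigOmega_mono:
  assumes "\<And>n. f n \<le> g n" and "bigOmega f l"
  shows "bigOmega g l"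
  using assms unfolding bigOmega_def by (meson of_nat_mono order_trans)

lemma bigO_antimono:
  assumes "\<And>n. f n \<le> g n" and "bigO g u"
  shows "bigO f u"
  using assms unfolding bigO_def by (meson of_nat_mono order_trans)

theorem mainTheorem2:
  fixes h :: "'a::bounded_semilattice_sup_bot \<Rightarrow> 'b::bounded_semilattice_sup_bot"
    and l u :: "nat \<Rightarrow> nat"
  assumes "lattice_embedding h"
  shows "(bigOmega (CS TYPE('a)) l \<longrightarrow> bigOmega (CS TYPE('b)) l)
       \<and> (bigO (CS TYPE('b)) u \<longrightarrow> bigO (CS TYPE('a)) u)"
  using CS_mono_embedding[OF assms] bigOmega_mono bigO_antimono by blast

end
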